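(* Let $w,n,g$ be positive integers with $w\le n$, let $a$ be the remainder of $n$ divided by $w$, and suppose $ga<w$. Suppose that $r:=\binom{n}{w}/\lfloor n/w\rfloor$ and $p:=r/g$ are both integers. Suppose that there exists a $g^{*}$-good almost-regular edge-coloring of $K_n^w$ and that there exists an orthogonal array $\mathrm{OA}(w,2w-1,g)$. Then there exists a $\mathrm{TOC}_q(n,2w-1,w)$, where $q=g+1$.
   Context: $\mathcal{H}_q(n,w)$ is the set of all words of length $n$ over $\mathbb{Z}_q$ with exactly $w$ nonzero entries, with the Hamming distance. An $(n,d,w)_q$-code is a nonempty subset of $\mathcal{H}_q(n,w)$ with pairwise Hamming distances at least $d$; $A_q(n,d,w)$ is the maximum size of such a code and a code of this size is optimal. A $\mathrm{TOC}_q(n,d,w)$ is a partition of $\mathcal{H}_q(n,w)$ into optimal $(n,d,w)_q$-codes. $K_n^w$ is the complete $w$-uniform hypergraph on $[n]$. A sub-hypergraph with vertex set $[n]$ is almost-regular if any two vertex degrees differ by at most one. An almost-regular edge-coloring $\{\mathcal{F}_{i,j}:1\le i\le r/g,\,1\le j\le g\}$ of $K_n^w$ is a partition of its edges into classes, each an almost-regular sub-hypergraph on $[n]$ with exactly $\lfloor n/w\rfloor$ edges. It is $g$-good if each $\mathcal{A}_i=\bigcup_{j=1}^g\mathcal{F}_{i,j}$ is the block set of a packing $\mathrm{P}(2,w,n)$ (every pair of points in at most one edge of $\mathcal{A}_i$), and $g^{*}$-good if moreover, for each $i$, the vertex set $[n]$ can be partitioned into $w$ classes so that every edge of $\mathcal{A}_i$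 meets each class in at most one vertex (a strong $w$-coloring). An orthogonal array $\mathrm{OA}(t,k,s)$ is an $s^t\times k$ array over an $s$-symbol alphabet such that in every choice of $t$ columns each ordered $t$-tuple of symbols appears in exactly one row. *)

theory Defs
  imports Main "HOL-Library.Disjoint_Sets"
begin

definition hamming :: "nat list \<Rightarrow> nat list \<Rightarrow> nat" where
  "hamming x y = card {i. i < length x \<and> x ! i \<noteq> y ! i}"

definition Hq :: "nat \<Rightarrow> nat \<Rightarrow> nat \<Rightarrow> nat list set" where
  "Hq q n w = {x. length x = n \<and> (\<forall>i<n. x ! i < q) \<and> card {i. i < n \<and> x ! i \<noteq> 0} = w}"

definition is_code :: "nat \<Rightarrow> nat \<Rightarrow> nat \<Rightarrow> nat \<Rightarrow> nat list set \<Rightarrow> bool" where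
  "is_code q n d w C \<longleftrightarrow> C \<noteq> {} \<and> C \<subseteq> Hq q n w \<and>
     (\<forall>x\<in>C. \<forall>y\<in>C. x \<noteq> y \<longrightarrow> hamming x y \<ge> d)"

definition Aq :: "nat \<Rightarrow> nat \<Rightarrow> nat \<Rightarrow> nat \<Rightarrow> nat" where
  "Aq q n d w = Max {card C | C. is_code q n d w C}"

definition optimal_code :: "nat \<Rightarrow> nat \<Rightarrow> nat \<Rightarrow> nat \<Rightarrow> nat list set \<Rightarrow> bool" where
  "optimal_code q n d w C \<longleftrightarrow> is_code q n d w C \<and> card C = Aq q n d w"

definition is_TOC :: "nat \<Rightarrow> nat \<Rightarrow> nat \<Rightarrow> nat \<Rightarrow> nat list set set \<Rightarrow> bool" where
  "is_TOC q n d w P \<longleftrightarrow> partition_on (Hq q n w) P \<and> (\<forall>C\<in>P. optimal_code q n d w C)"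

definition Knw_edges :: "nat \<Rightarrow> nat \<Rightarrow> nat set set" where
  "Knw_edges n w = {e. e \<subseteq> {1..n} \<and> card e = w}"

definition hdeg :: "nat set set \<Rightarrow> nat \<Rightarrow> nat" where
  "hdeg F v = card {e \<in> F. v \<in> e}"

definition almost_regular :: "nat \<Rightarrow> nat set set \<Rightarrow> bool" where
  "almost_regular n F \<longleftrightarrow>
     (\<forall>u\<in>{1..n}. \<forall>v\<in>{1..n}. hdeg F u \<le> hdeg F v + 1)"

definition almost_regular_coloring ::
  "nat \<Rightarrow> nat \<Rightarrow> nat \<Rightarrow> nat \<Rightarrow> (nat \<Rightarrow> nat \<Rightarrow> nat set set) \<Rightarrow> bool" where
  "almost_regular_coloring n w p g F \<longleftrightarrow>
     (\<Union>i\<in>{1..p}. \<Union>j\<in>{1..g}. F i j) = Knw_edges n w \<and>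
     (\<forall>i\<in>{1..p}. \<forall>j\<in>{1..g}. \<forall>i'\<in>{1..p}. \<forall>j'\<in>{1..g}.
         (i, j) \<noteq> (i', j') \<longrightarrow> F i j \<inter> F i' j' = {}) \<and>
     (\<forall>i\<in>{1..p}. \<forall>j\<in>{1..g}.
         F i j \<subseteq> Knw_edges n w \<and> almost_regular n (F i j) \<and> card (F i j) = n div w)"

definition is_packing :: "nat set set \<Rightarrow> bool" where
  "is_packing A \<longleftrightarrow> (\<forall>x y. x \<noteq> y \<longrightarrow> card {e \<in> A. x \<in> e \<and> y \<in> e} \<le> 1)"

definition strong_coloring :: "nat \<Rightarrow> nat \<Rightarrow> nat set set \<Rightarrow> bool" where
  "strong_coloring n w A \<longleftrightarrow>
     (\<exists>P. partition_on {1..n} P \<and> card P = w \<and> (\<forall>e\<in>A. \<forall>B\<in>P. card (e \<inter> B) \<le> 1))"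

definition g_star_good ::
  "nat \<Rightarrow> nat \<Rightarrow> nat \<Rightarrow> nat \<Rightarrow> (nat \<Rightarrow> nat \<Rightarrow> nat set set) \<Rightarrow> bool" where
  "g_star_good n w p g F \<longleftrightarrow>
     almost_regular_coloring n w p g F \<and>
     (\<forall>i\<in>{1..p}. is_packing (\<Union>j\<in>{1..g}. F i j) \<and>
                  strong_coloring n w (\<Union>j\<in>{1..g}. F i j))"

definition is_OA :: "nat \<Rightarrow> nat \<Rightarrow> nat \<Rightarrow> (nat \<Rightarrow> nat \<Rightarrow> nat) \<Rightarrow> bool" where
  "is_OA t k s M \<longleftrightarrow>
     (\<forall>\<rho><s ^ t. \<forall>c<k. M \<rho> c < s) \<and>
     (\<forall>T. T \<subseteq> {..<k} \<and> card T = t \<longrightarrow>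
        (\<forall>f. (\<forall>c\<in>T. f c < s) \<longrightarrow> (\<exists>!\<rho>. \<rho> < s ^ t \<and> (\<forall>c\<in>T. M \<rho> c = f c))))"

end

(* Each colour group A_i, the union of F_{i,1}, ..., F_{i,g}, is a packing whose blocks are
   rainbow under a strong w-colouring col_i, and each F_{i,j} is a matching.  For a shift vector
   rho in Z_g^w, the code C_{i,rho} contains, for every j and every e in F_{i,j}, the word
   supported on e whose symbol at vertex v is rho(col_i v) + j (mod g, moved into 1..g).  Words
   from the same F_{i,j} have disjoint supports; words from different F_{i,j} share at most one
   support point, where their symbols differ because the shifts j differ.  So C_{i,rho} has
   minimum distance 2w - 1 and g * floor(n/w) words, which is optimal: a coordinate is nonzero in
   at most g codewords and g * (n mod w) < w.  A word of weight w lies in exactly one C_{i,rho}: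
   its support determines (i, j), and then its symbols determine rho.  Letting rho range over all
   of Z_g^w makes the orthogonal array (and the divisibility hypotheses) unnecessary. *)

theory Submission
  imports Defs "HOL-Number_Theory.Cong"
begin

definition supp :: "nat list \<Rightarrow> nat set" where
  "supp x = {k. k < length x \<and> x ! k \<noteq> 0}"

lemma finite_supp [simp]: "finite (supp x)"
  by (simp add: supp_def)

lemma Hq_iff: "x \<in> Hq q n w \<longleftrightarrow> length x = n \<and> (\<forall>k<n. x ! k < q) \<and> card (supp x) = w"
  by (auto simp: Hq_def supp_def)

lemma finite_Hq: "finite (Hq q n w)"
proof (rule finite_subset)
  show "Hq q n w \<subseteq> {x. set x \<subseteq> {..<q} \<and> length x = n}"
    by (auto simp: Hq_def in_set_conv_nth)
qed (simp add: finite_lists_length_eq)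

lemma hamming_le_if_common_nonzero:
  assumes x: "x \<in> Hq q n w" and y: "y \<in> Hq q n w"
    and k: "k < n" "x ! k = y ! k" "x ! k \<noteq> 0"
  shows "hamming x y \<le> 2 * w - 2"
proof -
  have len: "length x = n" "length y = n" and card: "card (supp x) = w" "card (supp y) = w"
    using x y by (auto simp: Hq_iff)
  have k_common: "k \<in> supp x \<inter> supp y"
    using k len by (simp add: supp_def)
  then have "1 \<le> card (supp x \<inter> supp y)"
    by (metis One_nat_def Suc_leI card_gt_0_iff empty_iff finite_Int finite_supp)
  moreover have "card (supp x \<union> supp y) + card (supp x \<inter> supp y) = 2 * w"
    using card_Un_Int[of "supp x" "supp y"] card by simp
  ultimately have "card ((supp x \<union> supp y) - {k}) \<le> 2 * w - 2"
    using k_common by (simp add: card_Diff_singleton)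
  moreover have "{i. i < length x \<and> x ! i \<noteq> y ! i} \<subseteq> (supp x \<union> supp y) - {k}"
    using len k by (auto simp: supp_def)
  ultimately show ?thesis
    unfolding hamming_def by (meson card_mono finite_Diff finite_UnI finite_supp le_trans)
qed

lemma card_supp_Un_le_hamming:
  assumes "length x = length y" and "\<And>k. k \<in> supp x \<inter> supp y \<Longrightarrow> x ! k \<noteq> y ! k"
  shows "card (supp x \<union> supp y) \<le> hamming x y"
  unfolding hamming_def using assms by (intro card_mono) (force simp: supp_def)+

lemma card_code_nonzero_at_le:
  assumes C: "is_code q n (2 * w - 1) w C" and w: "0 < w" and k: "k < n"
  shows "card {x \<in> C. x ! k \<noteq> 0} \<le> q - 1"
proof -
  have CH: "C \<subseteq> Hq q n w"
    using C by (simp add: is_code_def)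
  have "inj_on (\<lambda>x. x ! k) {x \<in> C. x ! k \<noteq> 0}"
  proof (rule inj_onI, rule ccontr)
    fix x y assume "x \<in> {x \<in> C. x ! k \<noteq> 0}" "y \<in> {x \<in> C. x ! k \<noteq> 0}" "x ! k = y ! k" "x \<noteq> y"
    then have "2 * w - 1 \<le> hamming x y" "hamming x y \<le> 2 * w - 2"
      using C hamming_le_if_common_nonzero[of x q n w y k] CH k by (auto simp: is_code_def)
    then show False
      using w by linarith
  qed
  moreover have "(\<lambda>x. x ! k) ` {x \<in> C. x ! k \<noteq> 0} \<subseteq> {1..<q}"
    using CH k by (force simp: Hq_def)
  ultimately show ?thesis
    by (metis card_atLeastLessThan card_inj_on_le finite_atLeastLessThan)
qed

lemma card_code_times_weight_le:
  assumes C: "is_code q n (2 * w - 1) w C" and w: "0 < w"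
  shows "card C * w \<le> n * (q - 1)"
proof -
  have CH: "C \<subseteq> Hq q n w"
    using C by (simp add: is_code_def)
  then have "finite C"
    using finite_Hq finite_subset by blast
  have "card C * w = (\<Sum>x\<in>C. card {k \<in> {..<n}. x ! k \<noteq> 0})"
  proof -
    have "{k \<in> {..<n}. x ! k \<noteq> 0} = supp x" if "x \<in> C" for x
      using that CH by (auto simp: Hq_iff supp_def)
    then show ?thesis
      using CH by (simp add: Hq_iff subset_iff)
  qed
  also have "\<dots> = (\<Sum>k<n. card {x \<in> C. x ! k \<noteq> 0})"
    using sum.swap_restrict[OF \<open>finite C\<close>, of "{..<n}" "\<lambda>_ _. 1::nat" "\<lambda>x k. x ! k \<noteq> 0"]
    by simp
  also have "\<dots> \<le> n * (q - 1)"
    using sum_mono[of "{..<n}" "\<lambda>k. card {x \<in> C. x ! k \<noteq> 0}" "\<lambda>_. q - 1"]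
      card_code_nonzero_at_le[OF C w] by simp
  finally show ?thesis .
qed

lemma card_code_le:
  assumes C: "is_code q n (2 * w - 1) w C" and w: "0 < w" and r: "(q - 1) * (n mod w) < w"
  shows "card C \<le> (q - 1) * (n div w)"
proof -
  have "card C * w \<le> (q - 1) * (n div w) * w + (q - 1) * (n mod w)"
    using card_code_times_weight_le[OF C w] div_mult_mod_eq[of n w]
    by (metis add_mult_distrib2 mult.assoc mult.commute)
  then have "card C * w < ((q - 1) * (n div w) + 1) * w"
    using r by (simp add: algebra_simps)
  then have "card C < (q - 1) * (n div w) + 1"
    by (rule mult_less_cancel2[THEN iffD1, THEN conjunct2])
  then show ?thesis
    by simp
qed

lemma Aq_eqI:
  assumes "is_code q n d w C" and "\<And>C'. is_code q n d w C' \<Longrightarrow> card C' \<le> card C"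
  shows "Aq q n d w = card C"
proof -
  have bounded: "{card C' | C'. is_code q n d w C'} \<subseteq> {..card C}"
    using assms(2) by auto
  show ?thesis
    unfolding Aq_def
    by (rule Max_eqI[OF finite_subset[OF bounded finite_atMost]]) (use bounded assms(1) in auto)
qed

lemma finite_Knw_edges: "finite (Knw_edges n w)"
  by (rule finite_subset[of _ "Pow {1..n}"]) (auto simp: Knw_edges_def)

lemma sum_hdeg_eq:
  assumes F: "F \<subseteq> Knw_edges n w"
  shows "(\<Sum>v\<in>{1..n}. hdeg F v) = card F * w"
proof -
  have fin: "finite F"
    using F finite_Knw_edges finite_subset by blast
  have "(\<Sum>v\<in>{1..n}. hdeg F v) = (\<Sum>e\<in>F. card {v \<in> {1..n}. v \<in> e})"
    unfolding hdeg_def using sum.swap_restrict[OF _ fin, of "{1..n}" "\<lambda>_ _. 1::nat" "\<lambda>v e. v \<in> e"]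
    by simp
  also have "\<dots> = (\<Sum>e\<in>F. w)"
  proof (rule sum.cong)
    fix e assume "e \<in> F"
    then have "e \<subseteq> {1..n}" "card e = w"
      using F by (auto simp: Knw_edges_def)
    moreover have "{v \<in> {1..n}. v \<in> e} = e"
      using \<open>e \<subseteq> {1..n}\<close> by blast
    ultimately show "card {v \<in> {1..n}. v \<in> e} = w"
      by simp
  qed simp
  finally show ?thesis
    by simp
qed

text \<open>An almost-regular hypergraph with \<open>\<lfloor>n/w\<rfloor>\<close> edges of size \<open>w\<close> is a matching: a vertex
  of degree two would force every vertex to have positive degree, and the degree sum
  \<open>\<lfloor>n/w\<rfloor> w \<le> n\<close> leaves no room for that.\<close>
lemma almost_regular_pairwise_disjnt:
  assumes F: "F \<subseteq> Knw_edges n w" and ar: "almost_regular n F" and card_F: "card F = n div w"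
  shows "pairwise disjnt F"
proof (rule pairwiseI, rule ccontr)
  fix e e' assume e: "e \<in> F" "e' \<in> F" "e \<noteq> e'" "\<not> disjnt e e'"
  then obtain v where v: "v \<in> e" "v \<in> e'"
    by (auto simp: disjnt_def)
  have "e \<subseteq> {1..n}"
    using F e(1) by (auto simp: Knw_edges_def)
  then have v_vertex: "v \<in> {1..n}"
    using v by blast
  have "finite F"
    using F finite_Knw_edges finite_subset by blast
  then have "card {e, e'} \<le> hdeg F v"
    unfolding hdeg_def using e v by (intro card_mono) auto
  then have deg_v: "2 \<le> hdeg F v"
    using e by simp
  have "1 \<le> hdeg F u" if "u \<in> {1..n}" for u
    using ar v_vertex that deg_v unfolding almost_regular_def by fastforce
  then have "n - 1 \<le> (\<Sum>u\<in>{1..n} - {v}. hdeg F u)"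
    using sum_mono[of "{1..n} - {v}" "\<lambda>_. 1::nat" "hdeg F"] v_vertex by simp
  then have "n + 1 \<le> (\<Sum>u\<in>{1..n}. hdeg F u)"
    using sum.remove[OF finite_atLeastAtMost v_vertex, of "hdeg F"] deg_v v_vertex by simp
  moreover have "(\<Sum>u\<in>{1..n}. hdeg F u) \<le> n"
    using sum_hdeg_eq[OF F] card_F by simp
  ultimately show False
    by simp
qed

lemma strong_coloring_obtains_bij:
  assumes sc: "strong_coloring n w A" and A: "A \<subseteq> Knw_edges n w"
  obtains col where "\<And>e. e \<in> A \<Longrightarrow> bij_betw col e {0..<w}"
proof -
  obtain P where P: "partition_on {1..n} P" "card P = w"
    and meet: "\<And>e B. e \<in> A \<Longrightarrow> B \<in> P \<Longrightarrow> card (e \<inter> B) \<le> 1"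
    using sc unfolding strong_coloring_def by metis
  obtain h where h: "bij_betw h P {0..<w}"
    using ex_bij_betw_finite_nat[OF finite_elements[OF finite_atLeastAtMost P(1)]]
    unfolding P(2) by (elim exE)
  define part where "part v = (SOME B. B \<in> P \<and> v \<in> B)" for v
  have part: "part v \<in> P \<and> v \<in> part v" if "v \<in> {1..n}" for v
  proof -
    have "\<exists>B. B \<in> P \<and> v \<in> B"
      using that partition_onD1[OF P(1)] by blast
    then show ?thesis
      unfolding part_def by (rule someI_ex)
  qed
  have "bij_betw (h \<circ> part) e {0..<w}" if e: "e \<in> A" for e
  proof -
    have e_sub: "e \<subseteq> {1..n}" and card_e: "card e = w"
      using A e by (auto simp: Knw_edges_def)
    have "inj_on (h \<circ> part) e"
    proof (rule inj_onI)
      fix u v assume uv: "u \<in> e" "v \<in> e" "(h \<circ> part) u = (h \<circ> part) v"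
      have "part u \<in> P" "part v \<in> P"
        using part e_sub uv by blast+
      then have "part u = part v"
        using h uv(3) by (auto simp: bij_betw_def dest: inj_onD)
      then have "{u, v} \<subseteq> e \<inter> part u"
        using part e_sub uv by blast
      moreover have "card (e \<inter> part u) \<le> 1"
        using meet e part e_sub uv by blast
      ultimately show "u = v"
        using finite_subset[OF e_sub] card_mono[of "e \<inter> part u" "{u, v}"]
        by (cases "u = v") auto
    qed
    moreover have "(h \<circ> part) ` e \<subseteq> {0..<w}"
      using bij_betw_apply[OF h] part e_sub by auto
    moreover have "card ((h \<circ> part) ` e) = card {0..<w}"
      using card_image[OF \<open>inj_on (h \<circ> part) e\<close>] card_e by simp
    ultimately show ?thesis
      unfolding bij_betw_def by (simp add: card_subset_eq)
  qed
  then show ?thesis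
    using that by blast
qed

text \<open>Vertices of \<open>K\<^sub>n\<^sup>w\<close> are \<open>1..n\<close> while word positions are \<open>0..<n\<close>: vertex \<open>v\<close> sits at
  position \<open>v - 1\<close>.\<close>
definition edge_word :: "nat \<Rightarrow> nat set \<Rightarrow> (nat \<Rightarrow> nat) \<Rightarrow> nat list" where
  "edge_word n e f = map (\<lambda>k. if Suc k \<in> e then f (Suc k) else 0) [0..<n]"

lemma length_edge_word [simp]: "length (edge_word n e f) = n"
  by (simp add: edge_word_def)

lemma nth_edge_word [simp]: "k < n \<Longrightarrow> edge_word n e f ! k = (if Suc k \<in> e then f (Suc k) else 0)"
  by (simp add: edge_word_def)

lemma edge_word_cong: "(\<And>v. v \<in> e \<Longrightarrow> f v = f' v) \<Longrightarrow> edge_word n e f = edge_word n e f'"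
  by (simp add: edge_word_def)

lemma supp_edge_word: "(\<And>v. v \<in> e \<Longrightarrow> f v \<noteq> 0) \<Longrightarrow> supp (edge_word n e f) = {k. k < n \<and> Suc k \<in> e}"
  by (auto simp: supp_def split: if_splits)

lemma image_Suc_positions:
  assumes "e \<subseteq> {1..n}"
  shows "Suc ` {k. k < n \<and> Suc k \<in> e} = e"
proof (intro equalityI subsetI)
  fix v assume "v \<in> e"
  with assms have "1 \<le> v" "v \<le> n"
    by auto
  then obtain k where "v = Suc k" "k < n"
    by (cases v) auto
  with \<open>v \<in> e\<close> show "v \<in> Suc ` {k. k < n \<and> Suc k \<in> e}"
    by blast
qed blast

lemma card_positions:
  assumes "e \<subseteq> {1..n}"
  shows "card {k. k < n \<and> Suc k \<in> e} = card e"
proof -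
  have "card (Suc ` {k. k < n \<and> Suc k \<in> e}) = card {k. k < n \<and> Suc k \<in> e}"
    by (rule card_image) (simp add: inj_on_def)
  then show ?thesis
    unfolding image_Suc_positions[OF assms] by simp
qed

lemma edge_word_in_Hq:
  assumes e: "e \<in> Knw_edges n w" and "0 < q" and f: "\<And>v. v \<in> e \<Longrightarrow> 0 < f v \<and> f v < q"
  shows "edge_word n e f \<in> Hq q n w"
proof -
  have "supp (edge_word n e f) = {k. k < n \<and> Suc k \<in> e}"
    using f by (intro supp_edge_word) blast
  then have "card (supp (edge_word n e f)) = w"
    using card_positions[of e n] e by (simp add: Knw_edges_def)
  moreover have "edge_word n e f ! k < q" if "k < n" for k
    using that f \<open>0 < q\<close> by simp
  ultimately show ?thesis
    by (simp add: Hq_iff)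
qed

lemma edge_word_eq_imp_edge_eq:
  assumes "e \<subseteq> {1..n}" "e' \<subseteq> {1..n}" "\<And>v. v \<in> e \<Longrightarrow> f v \<noteq> 0" "\<And>v. v \<in> e' \<Longrightarrow> f' v \<noteq> 0"
    and "edge_word n e f = edge_word n e' f'"
  shows "e = e'"
proof -
  have "e = Suc ` supp (edge_word n e f)" "e' = Suc ` supp (edge_word n e' f')"
    using assms(1-4) by (simp_all add: supp_edge_word image_Suc_positions)
  then show ?thesis
    using assms(5) by simp
qed

lemma edge_word_supp: "edge_word (length x) (Suc ` supp x) (\<lambda>v. x ! (v - 1)) = x"
proof (rule nth_equalityI)
  fix k assume "k < length (edge_word (length x) (Suc ` supp x) (\<lambda>v. x ! (v - 1)))"
  then have "k < length x"
    by simp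
  moreover have "Suc k \<in> Suc ` supp x \<longleftrightarrow> x ! k \<noteq> 0"
    using \<open>k < length x\<close> by (auto simp: supp_def)
  ultimately show "edge_word (length x) (Suc ` supp x) (\<lambda>v. x ! (v - 1)) ! k = x ! k"
    by simp
qed simp

lemma card_Un_le_hamming_edge_word:
  assumes e: "e \<subseteq> {1..n}" "e' \<subseteq> {1..n}"
    and nz: "\<And>v. v \<in> e \<Longrightarrow> f v \<noteq> 0" "\<And>v. v \<in> e' \<Longrightarrow> f' v \<noteq> 0"
    and differ: "\<And>v. v \<in> e \<inter> e' \<Longrightarrow> f v \<noteq> f' v"
  shows "card (e \<union> e') \<le> hamming (edge_word n e f) (edge_word n e' f')"
proof -
  have supp: "supp (edge_word n e f) = {k. k < n \<and> Suc k \<in> e}"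
    "supp (edge_word n e' f') = {k. k < n \<and> Suc k \<in> e'}"
    using nz by (simp_all add: supp_edge_word)
  have "card (e \<union> e') = card {k. k < n \<and> Suc k \<in> e \<union> e'}"
    using card_positions[of "e \<union> e'" n] e by simp
  also have "{k. k < n \<and> Suc k \<in> e \<union> e'} = supp (edge_word n e f) \<union> supp (edge_word n e' f')"
    unfolding supp by blast
  also have "card \<dots> \<le> hamming (edge_word n e f) (edge_word n e' f')"
    using differ by (intro card_supp_Un_le_hamming) (simp_all add: supp)
  finally show ?thesis .
qed

lemma nth_edge_word_vertex: "e \<subseteq> {1..n} \<Longrightarrow> v \<in> e \<Longrightarrow> edge_word n e f ! (v - 1) = f v"
  by (cases v) auto

lemma inj_on_add_mod_lessThan: "inj_on (\<lambda>b. (b + j) mod g) {..<g::nat}"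
  by (rule inj_onI) (simp add: cong_add_rcancel_nat cong_less_modulus_unique_nat flip: cong_def)

lemma inj_on_add_mod_atLeastAtMost: "inj_on (\<lambda>j. (a + j) mod g) {1..g::nat}"
proof (rule inj_onI)
  fix j j' assume j: "j \<in> {1..g}" "j' \<in> {1..g}" and eq: "(a + j) mod g = (a + j') mod g"
  have "[(j - 1) + Suc a = (j' - 1) + Suc a] (mod g)"
    using j eq by (simp add: cong_def add.commute)
  then have "[j - 1 = j' - 1] (mod g)"
    by (simp only: cong_add_rcancel_nat)
  then have "j - 1 = j' - 1"
    by (rule cong_less_modulus_unique_nat) (use j in auto)
  moreover have "1 \<le> j" "1 \<le> j'"
    using j by auto
  ultimately show "j = j'"
    by linarith
qed

locale toc_construction =
  fixes n w g p :: nat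
    and F :: "nat \<Rightarrow> nat \<Rightarrow> nat set set"
    and col :: "nat \<Rightarrow> nat \<Rightarrow> nat"
  assumes w_pos: "0 < w" and g_pos: "0 < g" and w_le_n: "w \<le> n"
    and coloring: "almost_regular_coloring n w p g F"
    and packing: "\<And>i. i \<in> {1..p} \<Longrightarrow> is_packing (\<Union>j\<in>{1..g}. F i j)"
    and col_bij: "\<And>i j e. i \<in> {1..p} \<Longrightarrow> j \<in> {1..g} \<Longrightarrow> e \<in> F i j \<Longrightarrow> bij_betw (col i) e {0..<w}"
begin

definition codeword :: "nat \<Rightarrow> nat list \<Rightarrow> nat \<Rightarrow> nat set \<Rightarrow> nat list" where
  "codeword i \<rho> j e = edge_word n e (\<lambda>v. (\<rho> ! col i v + j) mod g + 1)"

definition code :: "nat \<Rightarrow> nat list \<Rightarrow> nat list set" where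
  "code i \<rho> = (\<lambda>(j, e). codeword i \<rho> j e) ` Sigma {1..g} (F i)"

definition shifts :: "nat list set" where
  "shifts = {\<rho>. length \<rho> = w \<and> (\<forall>c<w. \<rho> ! c < g)}"

definition toc :: "nat list set set" where
  "toc = (\<lambda>(i, \<rho>). code i \<rho>) ` ({1..p} \<times> shifts)"

lemma class_subset_Knw_edges: "i \<in> {1..p} \<Longrightarrow> j \<in> {1..g} \<Longrightarrow> F i j \<subseteq> Knw_edges n w"
  using coloring by (simp add: almost_regular_coloring_def)

lemma
  assumes "i \<in> {1..p}" "j \<in> {1..g}" "e \<in> F i j"
  shows edge_subset: "e \<subseteq> {1..n}" and card_edge: "card e = w"
  using class_subset_Knw_edges[OF assms(1,2)] assms(3) by (auto simp: Knw_edges_def)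

lemma class_unique:
  "i \<in> {1..p} \<Longrightarrow> j \<in> {1..g} \<Longrightarrow> i' \<in> {1..p} \<Longrightarrow> j' \<in> {1..g} \<Longrightarrow> e \<in> F i j \<Longrightarrow> e \<in> F i' j'
    \<Longrightarrow> i = i' \<and> j = j'"
  using coloring unfolding almost_regular_coloring_def by blast

lemma Union_classes: "(\<Union>i\<in>{1..p}. \<Union>j\<in>{1..g}. F i j) = Knw_edges n w"
  using coloring by (simp add: almost_regular_coloring_def)

lemma card_class: "i \<in> {1..p} \<Longrightarrow> j \<in> {1..g} \<Longrightarrow> card (F i j) = n div w"
  using coloring by (simp add: almost_regular_coloring_def)

lemma finite_class: "i \<in> {1..p} \<Longrightarrow> j \<in> {1..g} \<Longrightarrow> finite (F i j)"
  using class_subset_Knw_edges finite_Knw_edges finite_subset by blast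

lemma class_pairwise_disjnt: "i \<in> {1..p} \<Longrightarrow> j \<in> {1..g} \<Longrightarrow> pairwise disjnt (F i j)"
  using coloring by (intro almost_regular_pairwise_disjnt[OF class_subset_Knw_edges])
    (auto simp: almost_regular_coloring_def)

lemma card_Int_edges_le_1:
  assumes i: "i \<in> {1..p}" and j: "j \<in> {1..g}" "j' \<in> {1..g}"
    and e: "e \<in> F i j" "e' \<in> F i j'" "e \<noteq> e'"
  shows "card (e \<inter> e') \<le> 1"
proof (rule ccontr)
  assume "\<not> card (e \<inter> e') \<le> 1"
  then obtain u v where uv: "u \<in> e \<inter> e'" "v \<in> e \<inter> e'" "u \<noteq> v"
    using card_le_Suc0_iff_eq[of "e \<inter> e'"] by (metis One_nat_def card.infinite zero_le)
  let ?A = "\<Union>j\<in>{1..g}. F i j"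
  have "finite ?A"
    using finite_class i by simp
  then have "card {e, e'} \<le> card {x \<in> ?A. u \<in> x \<and> v \<in> x}"
    using uv e j by (intro card_mono) auto
  moreover have "card {x \<in> ?A. u \<in> x \<and> v \<in> x} \<le> 1"
    using packing[OF i] uv(3) unfolding is_packing_def by blast
  ultimately show False
    using e(3) by simp
qed

lemma codeword_in_Hq:
  "i \<in> {1..p} \<Longrightarrow> j \<in> {1..g} \<Longrightarrow> e \<in> F i j \<Longrightarrow> codeword i \<rho> j e \<in> Hq (g + 1) n w"
  unfolding codeword_def using class_subset_Knw_edges g_pos by (intro edge_word_in_Hq) auto

lemma codeword_eq_imp_edge_eq:
  "e \<subseteq> {1..n} \<Longrightarrow> e' \<subseteq> {1..n} \<Longrightarrow> codeword i \<rho> j e = codeword i' \<rho>' j' e' \<Longrightarrow> e = e'"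
  unfolding codeword_def by (erule edge_word_eq_imp_edge_eq) auto

lemma hamming_codeword_ge:
  assumes i: "i \<in> {1..p}" and j: "j \<in> {1..g}" "j' \<in> {1..g}"
    and e: "e \<in> F i j" "e' \<in> F i j'" and ne: "(j, e) \<noteq> (j', e')"
  shows "2 * w - 1 \<le> hamming (codeword i \<rho> j e) (codeword i \<rho> j' e')"
proof -
  have "e \<noteq> e'"
    using class_unique[OF i j(1) i j(2) e(1)] e(2) ne by auto
  then have meet: "card (e \<inter> e') \<le> 1"
    using card_Int_edges_le_1[OF i j e] by simp
  have fin: "finite e" "finite e'"
    using edge_subset[OF i j(1) e(1)] edge_subset[OF i j(2) e(2)] finite_subset by blast+
  have "card (e \<union> e') \<le> hamming (codeword i \<rho> j e) (codeword i \<rho> j' e')"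
    unfolding codeword_def
  proof (rule card_Un_le_hamming_edge_word[OF edge_subset[OF i j(1) e(1)] edge_subset[OF i j(2) e(2)]])
    fix v assume v: "v \<in> e \<inter> e'"
    show "(\<rho> ! col i v + j) mod g + 1 \<noteq> (\<rho> ! col i v + j') mod g + 1"
    proof (cases "j = j'")
      case True
      then show ?thesis
        using class_pairwise_disjnt[OF i j(1)] e \<open>e \<noteq> e'\<close> v by (auto simp: pairwise_def disjnt_def)
    next
      case False
      then show ?thesis
        using inj_on_add_mod_atLeastAtMost[of "\<rho> ! col i v" g] j by (auto dest: inj_onD)
    qed
  qed auto
  moreover have "card (e \<union> e') + card (e \<inter> e') = 2 * w"
    using card_Un_Int[OF fin] card_edge[OF i j(1) e(1)] card_edge[OF i j(2) e(2)] by simp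
  ultimately show ?thesis
    using meet by linarith
qed

lemma card_code: "i \<in> {1..p} \<Longrightarrow> card (code i \<rho>) = g * (n div w)"
proof -
  assume i: "i \<in> {1..p}"
  have "inj_on (\<lambda>(j, e). codeword i \<rho> j e) (Sigma {1..g} (F i))"
  proof (rule inj_onI, clarify)
    fix j e j' e' assume j: "j \<in> {1..g}" "j' \<in> {1..g}" and e: "e \<in> F i j" "e' \<in> F i j'"
      and eq: "codeword i \<rho> j e = codeword i \<rho> j' e'"
    have "e = e'"
      using codeword_eq_imp_edge_eq[OF edge_subset[OF i j(1) e(1)] edge_subset[OF i j(2) e(2)] eq] .
    then show "j = j' \<and> e = e'"
      using class_unique[OF i j(1) i j(2) e(1)] e(2) by blast
  qed
  then have "card (code i \<rho>) = card (Sigma {1..g} (F i))"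
    unfolding code_def by (rule card_image)
  also have "\<dots> = g * (n div w)"
    using finite_class[OF i] card_class[OF i] by simp
  finally show ?thesis .
qed

lemma code_is_code: "i \<in> {1..p} \<Longrightarrow> is_code (g + 1) n (2 * w - 1) w (code i \<rho>)"
proof -
  assume i: "i \<in> {1..p}"
  have "1 \<le> n div w"
    using w_pos w_le_n by (simp add: div_greater_zero_iff Suc_le_eq)
  then have "code i \<rho> \<noteq> {}"
    using card_code[OF i, of \<rho>] g_pos by (metis card.empty mult_is_0 not_one_le_zero zero_less_iff_neq_zero)
  moreover have "code i \<rho> \<subseteq> Hq (g + 1) n w"
    unfolding code_def using codeword_in_Hq[OF i] by auto
  moreover have "2 * w - 1 \<le> hamming x y" if xy: "x \<in> code i \<rho>" "y \<in> code i \<rho>" and "x \<noteq> y" for x y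
  proof -
    obtain j e j' e' where j: "j \<in> {1..g}" "j' \<in> {1..g}" and e: "e \<in> F i j" "e' \<in> F i j'"
      and xy: "x = codeword i \<rho> j e" "y = codeword i \<rho> j' e'"
      using xy unfolding code_def by auto
    then have "(j, e) \<noteq> (j', e')"
      using \<open>x \<noteq> y\<close> by auto
    then show ?thesis
      unfolding xy by (rule hamming_codeword_ge[OF i j e])
  qed
  ultimately show ?thesis
    unfolding is_code_def by blast
qed

lemma optimal_code_code:
  assumes i: "i \<in> {1..p}" and "g * (n mod w) < w"
  shows "optimal_code (g + 1) n (2 * w - 1) w (code i \<rho>)"
proof -
  have "card C \<le> card (code i \<rho>)" if "is_code (g + 1) n (2 * w - 1) w C" for C
    using card_code_le[OF that w_pos] assms card_code[OF i] by simp
  then show ?thesis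
    unfolding optimal_code_def using code_is_code[OF i] Aq_eqI by metis
qed

lemma in_code_unique:
  assumes i: "i \<in> {1..p}" "i' \<in> {1..p}" and \<rho>: "\<rho> \<in> shifts" "\<rho>' \<in> shifts"
    and x: "x \<in> code i \<rho>" "x \<in> code i' \<rho>'"
  shows "i = i' \<and> \<rho> = \<rho>'"
proof -
  obtain j e j' e' where j: "j \<in> {1..g}" "j' \<in> {1..g}" and e: "e \<in> F i j" "e' \<in> F i' j'"
    and eq: "codeword i \<rho> j e = codeword i' \<rho>' j' e'"
    using x unfolding code_def by auto
  have "e = e'"
    using codeword_eq_imp_edge_eq[OF edge_subset[OF i(1) j(1) e(1)] edge_subset[OF i(2) j(2) e(2)] eq] .
  then have same: "i = i'" "j = j'"
    using class_unique[OF i(1) j(1) i(2) j(2) e(1)] e(2) by auto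
  have "\<rho> ! c = \<rho>' ! c" if c: "c < w" for c
  proof -
    obtain v where v: "v \<in> e" "col i v = c"
      using bij_betw_imp_surj_on[OF col_bij[OF i(1) j(1) e(1)]] c by (metis atLeastLessThan_iff imageE zero_le)
    have "codeword i \<rho> j e ! (v - 1) = codeword i \<rho>' j e ! (v - 1)"
      using eq \<open>e = e'\<close> same by simp
    then have "(\<rho> ! c + j) mod g = (\<rho>' ! c + j) mod g"
      unfolding codeword_def using nth_edge_word_vertex[OF edge_subset[OF i(1) j(1) e(1)] v(1)] v(2) by simp
    then show ?thesis
      using inj_on_add_mod_lessThan[of j g] \<rho> c by (auto simp: shifts_def dest: inj_onD)
  qed
  then have "\<rho> = \<rho>'"
    using \<rho> by (intro nth_equalityI) (auto simp: shifts_def)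
  with same show ?thesis
    by simp
qed

text \<open>The inverse of \<open>codeword i \<rho> j e\<close> on words supported on \<open>e\<close>: the symbol at vertex \<open>v\<close>
  minus \<open>j + 1\<close>, modulo \<open>g\<close>, is the entry of \<open>\<rho>\<close> at colour \<open>col i v\<close>.\<close>
definition decode_shift :: "nat \<Rightarrow> nat \<Rightarrow> nat set \<Rightarrow> nat list \<Rightarrow> nat list" where
  "decode_shift i j e x = map (\<lambda>c. (x ! (the_inv_into e (col i) c - 1) - 1 + (g - j)) mod g) [0..<w]"

lemma decode_shift_in_shifts: "decode_shift i j e x \<in> shifts"
  unfolding shifts_def decode_shift_def using g_pos by simp

lemma codeword_decode_shift:
  assumes i: "i \<in> {1..p}" and j: "j \<in> {1..g}" and e: "e \<in> F i j"
    and x: "x \<in> Hq (g + 1) n w" and supp_x: "Suc ` supp x = e"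
  shows "codeword i (decode_shift i j e x) j e = x"
proof -
  have len: "length x = n" and less: "\<And>k. k < n \<Longrightarrow> x ! k < g + 1"
    using x by (auto simp: Hq_iff)
  have "codeword i (decode_shift i j e x) j e = edge_word n e (\<lambda>v. x ! (v - 1))"
    unfolding codeword_def
  proof (rule edge_word_cong)
    fix v assume v: "v \<in> e"
    then have "v - 1 \<in> supp x"
      using supp_x by auto
    then have symbol: "1 \<le> x ! (v - 1)" "x ! (v - 1) \<le> g"
      using less[of "v - 1"] len by (auto simp: supp_def)
    have "col i v < w" "the_inv_into e (col i) (col i v) = v"
      using col_bij[OF i j e] v by (auto simp: bij_betw_def the_inv_into_f_f)
    then have "decode_shift i j e x ! col i v = (x ! (v - 1) - 1 + g - j) mod g"
      using j by (simp add: decode_shift_def)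
    then have "(decode_shift i j e x ! col i v + j) mod g = (x ! (v - 1) - 1 + g) mod g"
      using j by (simp add: mod_add_left_eq)
    then show "(decode_shift i j e x ! col i v + j) mod g + 1 = x ! (v - 1)"
      using symbol by simp
  qed
  also have "\<dots> = x"
    using edge_word_supp[of x] len supp_x by simp
  finally show ?thesis .
qed

lemma Hq_covered:
  assumes x: "x \<in> Hq (g + 1) n w"
  shows "\<exists>i\<in>{1..p}. \<exists>\<rho>\<in>shifts. x \<in> code i \<rho>"
proof -
  have "supp x \<subseteq> {..<n}" "card (supp x) = w"
    using x by (auto simp: Hq_iff supp_def)
  then have "Suc ` supp x \<in> Knw_edges n w"
    by (auto simp: Knw_edges_def card_image)
  then obtain i j where i: "i \<in> {1..p}" and j: "j \<in> {1..g}" and e: "Suc ` supp x \<in> F i j"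
    using Union_classes by blast
  then have "x \<in> code i (decode_shift i j (Suc ` supp x) x)"
    unfolding code_def using codeword_decode_shift[OF i j e x] by force
  with i show ?thesis
    using decode_shift_in_shifts by blast
qed

lemma is_TOC_toc:
  assumes "g * (n mod w) < w"
  shows "is_TOC (g + 1) n (2 * w - 1) w toc"
proof -
  have "\<Union>toc = Hq (g + 1) n w"
    using code_is_code Hq_covered unfolding toc_def is_code_def by fastforce
  moreover have "disjoint toc"
  proof (rule disjointI)
    fix C D assume "C \<in> toc" "D \<in> toc" "C \<noteq> D"
    then obtain i \<rho> i' \<rho>' where "i \<in> {1..p}" "i' \<in> {1..p}" "\<rho> \<in> shifts" "\<rho>' \<in> shifts"
      and "C = code i \<rho>" "D = code i' \<rho>'"
      unfolding toc_def by blast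
    then show "C \<inter> D = {}"
      using in_code_unique \<open>C \<noteq> D\<close> by blast
  qed
  moreover have "{} \<notin> toc"
  proof
    assume "{} \<in> toc"
    then obtain i \<rho> where "i \<in> {1..p}" "{} = code i \<rho>"
      unfolding toc_def by blast
    then show False
      using code_is_code[of i \<rho>] by (simp add: is_code_def)
  qed
  moreover have "\<forall>C\<in>toc. optimal_code (g + 1) n (2 * w - 1) w C"
    using optimal_code_code[OF _ assms] unfolding toc_def by auto
  ultimately show ?thesis
    unfolding is_TOC_def partition_on_def by blast
qed

end

theorem theorem3p4:
  fixes w n g :: nat
  assumes "0 < w" "0 < n" "0 < g" "w \<le> n"
    and "g * (n mod w) < w"
    and "(n div w) dvd (n choose w)"
    and "g dvd ((n choose w) div (n div w))"
    and "\<exists>F. g_star_good n w ((n choose w) div (n div w) div g) g F"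
    and "\<exists>M. is_OA w (2 * w - 1) g M"
  shows "\<exists>P. is_TOC (g + 1) n (2 * w - 1) w P"
proof -
  define p where "p = (n choose w) div (n div w) div g"
  obtain F where "g_star_good n w p g F"
    using assms(8) unfolding p_def by blast
  then have coloring: "almost_regular_coloring n w p g F"
    and groups: "\<forall>i\<in>{1..p}. is_packing (\<Union>j\<in>{1..g}. F i j) \<and> strong_coloring n w (\<Union>j\<in>{1..g}. F i j)"
    unfolding g_star_good_def by blast+
  have "\<forall>i\<in>{1..p}. \<exists>c. \<forall>e\<in>(\<Union>j\<in>{1..g}. F i j). bij_betw c e {0..<w}"
  proof
    fix i assume i: "i \<in> {1..p}"
    have "(\<Union>j\<in>{1..g}. F i j) \<subseteq> Knw_edges n w"
      using coloring i unfolding almost_regular_coloring_def by blast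
    then show "\<exists>c. \<forall>e\<in>(\<Union>j\<in>{1..g}. F i j). bij_betw c e {0..<w}"
      using strong_coloring_obtains_bij groups i by metis
  qed
  then obtain col where "\<forall>i\<in>{1..p}. \<forall>e\<in>(\<Union>j\<in>{1..g}. F i j). bij_betw (col i) e {0..<w}"
    by (rule bchoice[elim_format]) blast
  then interpret toc_construction n w g p F col
    using assms(1,3,4) coloring groups by unfold_locales blast+
  show ?thesis
    using is_TOC_toc[OF assms(5)] by blast
qed

end
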